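(* For all $s>0$ and $K\in\mathbb{N}$, the function $f^{s,K}_{square}(t):=\frac{2s}{K}\sum_{k=1}^K\big([t-\tfrac{sk}{K}]_++[-t-\tfrac{sk}{K}]_+\big)$ satisfies $$\sup_{t\in[-s,s]}|f^{s,K}_{square}(t)-t^2|\le s^2\Big(\frac1K+\frac1{K^2}\Big).$$
   Context: $[t]_+=\max(t,0)$. *)

theory Defs
  imports "HOL-Analysis.Analysis"
begin

definition pos_part :: "real \<Rightarrow> real" where
  "pos_part t = max t 0"

definition f_square :: "real \<Rightarrow> nat \<Rightarrow> real \<Rightarrow> real" where
  "f_square s K t = (2 * s / real K) *
     (\<Sum>k=1..K. pos_part (t - s * real k / real K) + pos_part (- t - s * real k / real K))"

end

theory Submission
  imports Defs
begin

text \<open>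
  By symmetry it suffices to take \<open>0 \<le> t \<le> s\<close>. With mesh \<open>h = s / K\<close>, let
  \<open>j h \<le> t \<le> (j + 1) h\<close> with \<open>j < K\<close>. Only the terms \<open>[t - k h]\<^sub>+\<close> with \<open>k \<le> j\<close>
  are nonzero, and summing them gives the exact error
  \<open>t\<^sup>2 - f(t) = (t - j h)\<^sup>2 + j h\<^sup>2\<close>, which lies between \<open>0\<close> and \<open>K h\<^sup>2 = s\<^sup>2 / K\<close>.
\<close>

lemma f_square_uminus: "f_square s K (- t) = f_square s K t"
  unfolding f_square_def by (simp add: add.commute)

lemma exists_unit_interval_index:
  fixes x :: real
  assumes "0 \<le> x" "x \<le> real n" "n \<ge> 1"
  obtains j where "j < n" "real j \<le> x" "x \<le> real j + 1"
proof
  define j where "j = min (n - 1) (nat \<lfloor>x\<rfloor>)"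
  show "j < n" using assms(3) by (simp add: j_def)
  show "real j \<le> x" using assms(1) by (simp add: j_def min_def) linarith
  show "x \<le> real j + 1"
  proof (cases "nat \<lfloor>x\<rfloor> \<le> n - 1")
    case True
    then show ?thesis using assms(1) by (simp add: j_def)
  next
    case False
    then show ?thesis using assms(2,3) by (simp add: j_def of_nat_diff)
  qed
qed

lemma sum_pos_part_shifts:
  fixes t h :: real
  assumes "h > 0" "real j * h \<le> t" "t \<le> (real j + 1) * h" "j \<le> n"
  shows "(\<Sum>k=1..n. pos_part (t - real k * h)) = (\<Sum>k=1..j. t - real k * h)"
proof -
  have pos_terms: "pos_part (t - real k * h) = (if k \<in> {..j} then t - real k * h else 0)" for k
  proof (cases "k \<le> j")
    case True
    then have "real k * h \<le> real j * h" using assms(1) by simp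
    then show ?thesis using True assms(2) by (simp add: pos_part_def)
  next
    case False
    then have "(real j + 1) * h \<le> real k * h" using assms(1) by simp
    then show ?thesis using False assms(3) by (simp add: pos_part_def)
  qed
  have "(\<Sum>k=1..n. pos_part (t - real k * h)) = (\<Sum>k\<in>{1..n} \<inter> {..j}. t - real k * h)"
    by (simp only: pos_terms sum.inter_restrict[OF finite_atLeastAtMost])
  also have "{1..n} \<inter> {..j} = {1..j}" using assms(4) by auto
  finally show ?thesis .
qed

lemma sum_linear_shifts:
  fixes t h :: real
  shows "(\<Sum>k=1..j. t - real k * h) = real j * t - h * real j * (real j + 1) / 2"
proof -
  have "(\<Sum>k=1..j. t - real k * h) = real j * t - h * (\<Sum>k=1..j. real k)"
    by (simp add: sum_subtractf sum_distrib_left mult.commute)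
  then show ?thesis using double_gauss_sum_from_Suc_0[of j, where ?'a = real] by simp
qed

lemma square_minus_f_square:
  fixes s t :: real and K :: nat
  defines "h \<equiv> s / real K"
  assumes "s > 0" "0 \<le> t" "real j * h \<le> t" "t \<le> (real j + 1) * h" "j < K"
  shows "t ^ 2 - f_square s K t = (t - real j * h) ^ 2 + real j * h ^ 2"
proof -
  have "h > 0" using assms(2,6) by (simp add: h_def)
  have neg_terms: "pos_part (- t - s * real k / real K) = 0" for k
  proof -
    have "0 \<le> s * real k / real K" using assms(2) by simp
    then show ?thesis using assms(3) by (simp add: pos_part_def)
  qed
  have "f_square s K t = 2 * h * (\<Sum>k=1..K. pos_part (t - real k * h))"
    unfolding f_square_def neg_terms by (simp add: h_def mult.commute)
  also have "\<dots> = 2 * h * (real j * t - h * real j * (real j + 1) / 2)"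
    unfolding sum_pos_part_shifts[OF \<open>h > 0\<close> assms(4,5) less_imp_le[OF assms(6)]]
      sum_linear_shifts ..
  finally show ?thesis by (simp add: field_simps power2_eq_square)
qed

lemma f_square_error_le:
  fixes s t :: real
  assumes "s > 0" "K \<ge> 1" "0 \<le> t" "t \<le> s"
  shows "\<bar>f_square s K t - t ^ 2\<bar> \<le> s ^ 2 / real K"
proof -
  define h where "h = s / real K"
  have "h > 0" using assms(1,2) by (simp add: h_def)
  have "t / h \<le> real K" using assms(2,4) \<open>h > 0\<close> by (simp add: h_def field_simps)
  then obtain j where "j < K" and j: "real j \<le> t / h" "t / h \<le> real j + 1"
    using exists_unit_interval_index[of "t / h" K] assms(2,3) \<open>h > 0\<close> by auto
  then have lo: "real j * h \<le> t" and hi: "t \<le> (real j + 1) * h"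
    using \<open>h > 0\<close> by (simp_all add: field_simps)
  have err: "t ^ 2 - f_square s K t = (t - real j * h) ^ 2 + real j * h ^ 2"
    using square_minus_f_square[of s t j K] assms(1,3) lo hi \<open>j < K\<close> by (simp add: h_def)
  have "(t - real j * h) ^ 2 \<le> h ^ 2"
    using lo hi by (intro power_mono) (auto simp: algebra_simps)
  moreover have "real j * h ^ 2 \<le> (real K - 1) * h ^ 2"
    using \<open>j < K\<close> by (intro mult_right_mono) auto
  ultimately have "\<bar>f_square s K t - t ^ 2\<bar> \<le> real K * h ^ 2"
    unfolding abs_minus_commute[of "f_square s K t"] err by (simp add: algebra_simps)
  also have "\<dots> = s ^ 2 / real K" using assms(2) by (simp add: h_def power2_eq_square)
  finally show ?thesis .
qed

theorem lemma12:
  fixes s :: real and K :: nat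
  assumes "s > 0" and "K \<ge> 1"
  shows "(SUP t\<in>{-s..s}. \<bar>f_square s K t - t ^ 2\<bar>) \<le> s ^ 2 * (1 / real K + 1 / (real K) ^ 2)"
proof (rule cSUP_least)
  show "{-s..s} \<noteq> {}" using assms by simp
next
  fix t assume t: "t \<in> {-s..s}"
  have "\<bar>f_square s K t - t ^ 2\<bar> = \<bar>f_square s K \<bar>t\<bar> - \<bar>t\<bar> ^ 2\<bar>"
    by (cases "t \<ge> 0") (simp_all add: f_square_uminus)
  also have "\<dots> \<le> s ^ 2 / real K"
    using t by (intro f_square_error_le[OF assms]) auto
  also have "\<dots> \<le> s ^ 2 * (1 / real K + 1 / (real K) ^ 2)"
    by (simp add: algebra_simps)
  finally show "\<bar>f_square s K t - t ^ 2\<bar> \<le> s ^ 2 * (1 / real K + 1 / (real K) ^ 2)" .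
qed

end
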